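(* Let $\Omega_1,\dots,\Omega_k$ be pairwise disjoint non-empty subsets of $\{1,\dots,n\}$, let $G_i\leq\mathrm{Sym}(\Omega_i)$, and let $G=G_1\cdot G_2\cdots G_k$ be their internal direct product, acting on $\Omega=\Omega_1\cup\cdots\cup\Omega_k$ by $x^{g_1\cdots g_k}=x^{g_i}$ for $x\in\Omega_i$. If every $G_i$ (with its action on $\Omega_i$) has the EKR property, then $G$ (with its action on $\Omega$) has the EKR property.
   Context: The internal direct product consists of the products $g_1g_2\cdots g_k$ with $g_i\in G_i$, with multiplication $(g_1\cdots g_k)(h_1\cdots h_k)=(g_1h_1)\cdots(g_kh_k)$. For a permutation group acting on a finite set: two elements $\pi,\tau$ intersect if $\pi\tau^{-1}$ has a fixed point. A subset is intersecting if every pair of its elements intersect. A group has the EKR property if every intersecting subset has size at most the size of the largest point-stabilizer. *)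

theory Defs
  imports "HOL-Combinatorics.Permutations"
begin

definition perm_group_on :: "'a set \<Rightarrow> ('a \<Rightarrow> 'a) set \<Rightarrow> bool" where
  "perm_group_on X G \<longleftrightarrow> (\<forall>g\<in>G. g permutes X) \<and> id \<in> G \<and>
     (\<forall>g\<in>G. \<forall>h\<in>G. g \<circ> h \<in> G) \<and> (\<forall>g\<in>G. inv g \<in> G)"

definition intersecting :: "'a set \<Rightarrow> ('a \<Rightarrow> 'a) set \<Rightarrow> bool" where
  "intersecting X S \<longleftrightarrow> (\<forall>p\<in>S. \<forall>t\<in>S. \<exists>x\<in>X. (p \<circ> inv t) x = x)"

definition stabilizer :: "('a \<Rightarrow> 'a) set \<Rightarrow> 'a \<Rightarrow> ('a \<Rightarrow> 'a) set" where
  "stabilizer G x = {g \<in> G. g x = x}"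

definition EKR :: "'a set \<Rightarrow> ('a \<Rightarrow> 'a) set \<Rightarrow> bool" where
  "EKR X G \<longleftrightarrow> (\<forall>S. S \<subseteq> G \<and> intersecting X S \<longrightarrow>
     card S \<le> Max ((\<lambda>x. card (stabilizer G x)) ` X))"

definition internal_dprod :: "nat \<Rightarrow> (nat \<Rightarrow> ('a \<Rightarrow> 'a) set) \<Rightarrow> ('a \<Rightarrow> 'a) set" where
  "internal_dprod k G = {foldr (\<circ>) (map f [0..<k]) id | f. \<forall>i<k. f i \<in> G i}"

end

theory Submission
  imports Defs
begin

text \<open>Write an element of \<open>A \<cdot> B\<close> as a pair \<open>(a, b)\<close>; two such elements intersect on
  \<open>X \<union> Y\<close> iff their first coordinates intersect on \<open>X\<close> or their second ones on \<open>Y\<close>.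
  The EKR property of \<open>A\<close> is used through an expansion bound: a set \<open>I\<close> of pairwise
  intersecting elements of \<open>A\<close> satisfies \<open>|I| |A| \<le> s\<^sub>A (|I| + |N(I)|)\<close>, where \<open>N(I)\<close>
  consists of the elements failing to intersect some member of \<open>I\<close> and \<open>s\<^sub>A\<close> is the
  largest stabiliser order. It follows from EKR applied to \<open>(J g - (I \<union> N(I))) \<union> I\<close> for
  each right coset \<open>J g\<close> of a largest stabiliser \<open>J\<close>, averaged over \<open>g\<close>.
  Every element of an intersecting \<open>S \<subseteq> A \<cdot> B\<close> has a first coordinate intersecting all
  first coordinates in its column or a second coordinate intersecting all second
  coordinates in its row. Applying the expansion bound column- and rowwise to these two
  parts, and using that \<open>S\<close> and the two neighbourhoods are disjoint subsets of
  \<open>A \<times> B\<close>, yields \<open>|S| \<le> max (s\<^sub>A |B|) (s\<^sub>B |A|)\<close>, the order of a point stabiliser of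
  \<open>A \<cdot> B\<close>. Induction on the number of factors finishes the proof.\<close>

definition meets :: "'a set \<Rightarrow> ('a \<Rightarrow> 'a) \<Rightarrow> ('a \<Rightarrow> 'a) \<Rightarrow> bool" where
  "meets X p q \<longleftrightarrow> (\<exists>x\<in>X. p x = q x)"

lemma meets_sym: "meets X p q \<longleftrightarrow> meets X q p"
  unfolding meets_def by metis

lemma meets_comp_right:
  assumes "g permutes X"
  shows "meets X (p \<circ> g) (q \<circ> g) \<longleftrightarrow> meets X p q"
  using permutes_image[OF assms] unfolding meets_def by (metis comp_apply imageE imageI)

lemma intersecting_iff_meets:
  assumes "\<And>g. g \<in> S \<Longrightarrow> g permutes X"
  shows "intersecting X S \<longleftrightarrow> (\<forall>p\<in>S. \<forall>q\<in>S. meets X p q)"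
proof -
  have "(\<exists>x\<in>X. (p \<circ> inv q) x = x) \<longleftrightarrow> meets X p q" if "q permutes X" for p q
  proof -
    have "(\<exists>x\<in>X. (p \<circ> inv q) x = x) \<longleftrightarrow> meets X (p \<circ> inv q) (q \<circ> inv q)"
      using permutes_inv_o(1)[OF that] by (simp add: meets_def)
    also have "\<dots> \<longleftrightarrow> meets X p q"
      by (rule meets_comp_right[OF permutes_inv[OF that]])
    finally show ?thesis .
  qed
  then show ?thesis
    unfolding intersecting_def using assms by blast
qed

lemma perm_group_on_permutes: "perm_group_on X G \<Longrightarrow> g \<in> G \<Longrightarrow> g permutes X"
  unfolding perm_group_on_def by blast

lemma perm_group_on_comp: "perm_group_on X G \<Longrightarrow> g \<in> G \<Longrightarrow> h \<in> G \<Longrightarrow> g \<circ> h \<in> G"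
  unfolding perm_group_on_def by blast

lemma perm_group_on_inv: "perm_group_on X G \<Longrightarrow> g \<in> G \<Longrightarrow> inv g \<in> G"
  unfolding perm_group_on_def by blast

lemma perm_group_on_finite:
  assumes "perm_group_on X G" "finite X"
  shows "finite G"
  using finite_subset[OF _ finite_permutations[OF assms(2)]] perm_group_on_permutes[OF assms(1)]
  by blast

lemma perm_group_on_empty: "perm_group_on {} G \<Longrightarrow> G = {id}"
  unfolding perm_group_on_def using permutes_empty by blast

lemma EKR_empty: "EKR {} G"
proof -
  have "S = {}" if "intersecting {} S" for S :: "('a \<Rightarrow> 'a) set"
    using that unfolding intersecting_def by blast
  then show ?thesis unfolding EKR_def by (metis card.empty zero_le)
qed

lemma card_comp_right_image:
  assumes "g permutes X"
  shows "card ((\<lambda>j. j \<circ> g) ` J) = card J"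
proof (rule card_image, rule inj_onI)
  fix j j' assume "j \<circ> g = j' \<circ> g"
  then have "j \<circ> g \<circ> inv g = j' \<circ> g \<circ> inv g" by simp
  then show "j = j'" by (simp add: comp_assoc permutes_inv_o(1)[OF assms])
qed

lemma card_comp_left_image:
  assumes "g permutes X"
  shows "card ((\<lambda>j. g \<circ> j) ` J) = card J"
proof (rule card_image, rule inj_onI)
  fix j j' assume "g \<circ> j = g \<circ> j'"
  then have "inv g \<circ> g \<circ> j = inv g \<circ> g \<circ> j'" by (simp add: comp_assoc)
  then show "j = j'" by (simp add: permutes_inv_o(2)[OF assms])
qed

lemma sum_card_coset_Int:
  assumes grp: "perm_group_on X A" and fin: "finite A" and J: "J \<subseteq> A" and Y: "Y \<subseteq> A"
  shows "(\<Sum>g\<in>A. card ((\<lambda>j. j \<circ> g) ` J \<inter> Y)) = card J * card Y"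
proof -
  note perm = perm_group_on_permutes[OF grp]
  have finJ: "finite J" using J fin finite_subset by blast
  have row: "card ((\<lambda>j. j \<circ> g) ` J \<inter> Y) = card (J \<inter> {j. j \<circ> g \<in> Y})" if "g \<in> A" for g
  proof -
    have "(\<lambda>j. j \<circ> g) ` J \<inter> Y = (\<lambda>j. j \<circ> g) ` (J \<inter> {j. j \<circ> g \<in> Y})" by blast
    then show ?thesis using card_comp_right_image[OF perm[OF that]] by simp
  qed
  have column: "card (A \<inter> {g. j \<circ> g \<in> Y}) = card Y" if "j \<in> J" for j
  proof -
    have j: "j permutes X" "inv j \<in> A" using that J perm perm_group_on_inv[OF grp] by auto
    have "A \<inter> {g. j \<circ> g \<in> Y} = (\<lambda>y. inv j \<circ> y) ` Y"
    proof (intro equalityI subsetI)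
      fix g assume "g \<in> A \<inter> {g. j \<circ> g \<in> Y}"
      then show "g \<in> (\<lambda>y. inv j \<circ> y) ` Y"
        by (auto simp: image_iff comp_assoc[symmetric] permutes_inv_o(2)[OF j(1)] intro!: bexI)
    next
      fix g assume "g \<in> (\<lambda>y. inv j \<circ> y) ` Y"
      then show "g \<in> A \<inter> {g. j \<circ> g \<in> Y}"
        using Y j perm_group_on_comp[OF grp]
        by (auto simp: comp_assoc[symmetric] permutes_inv_o(1)[OF j(1)])
    qed
    then show ?thesis using card_comp_left_image[OF permutes_inv[OF j(1)]] by simp
  qed
  have "(\<Sum>g\<in>A. card ((\<lambda>j. j \<circ> g) ` J \<inter> Y)) = (\<Sum>g\<in>A. \<Sum>j\<in>J. of_bool (j \<circ> g \<in> Y))"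
    using finJ row by simp
  also have "\<dots> = (\<Sum>j\<in>J. \<Sum>g\<in>A. of_bool (j \<circ> g \<in> Y))"
    by (rule sum.swap)
  also have "\<dots> = card J * card Y"
    using fin column by simp
  finally show ?thesis .
qed

text \<open>\<open>nbhd A m I\<close> is the neighbourhood of \<open>I\<close> in the graph on \<open>A\<close> joining \<open>p\<close> and \<open>q\<close>
  when \<open>\<not> m p q\<close>; for \<open>m = meets X\<close> this is the derangement graph of \<open>A\<close>.\<close>

definition nbhd :: "'b set \<Rightarrow> ('b \<Rightarrow> 'b \<Rightarrow> bool) \<Rightarrow> 'b set \<Rightarrow> 'b set" where
  "nbhd A m I = {q\<in>A. \<exists>p\<in>I. \<not> m p q}"

definition expansion_bound :: "'b set \<Rightarrow> ('b \<Rightarrow> 'b \<Rightarrow> bool) \<Rightarrow> nat \<Rightarrow> bool" where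
  "expansion_bound A m s \<longleftrightarrow> (\<forall>I\<subseteq>A. (\<forall>p\<in>I. \<forall>q\<in>I. m p q) \<longrightarrow>
     card I * card A \<le> s * (card I + card (nbhd A m I)))"

lemma card_le_card_coset_Int_nbhd:
  assumes grp: "perm_group_on X A" and ekr: "EKR X A" and fin: "finite A"
    and x: "x \<in> X" and max: "card (stabilizer A x) = Max ((\<lambda>x. card (stabilizer A x)) ` X)"
    and g: "g \<in> A" and I: "I \<subseteq> A" and clique: "\<forall>p\<in>I. \<forall>q\<in>I. meets X p q"
  shows "card I \<le> card ((\<lambda>j. j \<circ> g) ` stabilizer A x \<inter> (I \<union> nbhd A (meets X) I))"
proof -
  define C where "C = (\<lambda>j. j \<circ> g) ` stabilizer A x"
  define Y where "Y = I \<union> nbhd A (meets X) I"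
  define K where "K = (C - Y) \<union> I"
  note perm = perm_group_on_permutes[OF grp]
  have CA: "C \<subseteq> A"
    unfolding C_def stabilizer_def using perm_group_on_comp[OF grp] g by auto
  have C_meets: "meets X u v" if "u \<in> C" "v \<in> C" for u v
  proof -
    obtain j j' where "j x = x" "j' x = x" "u = j \<circ> g" "v = j' \<circ> g"
      using \<open>u \<in> C\<close> \<open>v \<in> C\<close> unfolding C_def stabilizer_def by blast
    then show ?thesis using x meets_comp_right[OF perm[OF g]] unfolding meets_def by metis
  qed
  have KA: "K \<subseteq> A" unfolding K_def using CA I by blast
  have "\<forall>p\<in>K. \<forall>q\<in>K. meets X p q"
    using clique C_meets CA meets_sym[of X] unfolding K_def Y_def nbhd_def by blast
  then have "intersecting X K"
    using intersecting_iff_meets[of K X] perm KA by blast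
  then have "card K \<le> card (stabilizer A x)"
    using ekr KA max unfolding EKR_def by auto
  also have "\<dots> = card C"
    unfolding C_def by (rule card_comp_right_image[OF perm[OF g], symmetric])
  finally have "card K \<le> card C" .
  moreover have "finite C" "finite I" using CA I fin finite_subset by auto
  then have "card K = card (C - Y) + card I"
    unfolding K_def by (intro card_Un_disjoint) (auto simp: Y_def)
  moreover have "card C = card (C \<inter> Y) + card (C - Y)"
    using \<open>finite C\<close> by (rule card_Int_Diff)
  ultimately show ?thesis unfolding C_def Y_def by linarith
qed

lemma expansion_bound_if_EKR:
  assumes grp: "perm_group_on X A" and ekr: "EKR X A" and fin: "finite X" and ne: "X \<noteq> {}"
  shows "expansion_bound A (meets X) (Max ((\<lambda>x. card (stabilizer A x)) ` X))"
  unfolding expansion_bound_def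
proof (intro allI impI)
  fix I assume I: "I \<subseteq> A" and clique: "\<forall>p\<in>I. \<forall>q\<in>I. meets X p q"
  define s where "s = Max ((\<lambda>x. card (stabilizer A x)) ` X)"
  define Y where "Y = I \<union> nbhd A (meets X) I"
  have finA: "finite A" by (rule perm_group_on_finite[OF grp fin])
  have "s \<in> (\<lambda>x. card (stabilizer A x)) ` X"
    unfolding s_def using fin ne by (intro Max_in) auto
  then obtain x where x: "x \<in> X" and max: "card (stabilizer A x) = s" by auto
  have J: "stabilizer A x \<subseteq> A" unfolding stabilizer_def by blast
  have "card I * card A = (\<Sum>g\<in>A. card I)" by simp
  also have "\<dots> \<le> (\<Sum>g\<in>A. card ((\<lambda>j. j \<circ> g) ` stabilizer A x \<inter> Y))"
    unfolding Y_def using card_le_card_coset_Int_nbhd[OF grp ekr finA x max[unfolded s_def] _ I clique]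
    by (intro sum_mono) auto
  also have "\<dots> = s * card Y"
    using sum_card_coset_Int[OF grp finA J] max I by (auto simp: Y_def nbhd_def)
  also have "card Y = card I + card (nbhd A (meets X) I)"
    unfolding Y_def using I finA clique
    by (intro card_Un_disjoint) (auto simp: nbhd_def intro: finite_subset)
  finally show "card I * card A \<le> s * (card I + card (nbhd A (meets X) I))" .
qed

lemma card_eq_sum_card_columns:
  assumes "finite B" "finite W" "W \<subseteq> A \<times> B"
  shows "card W = (\<Sum>b\<in>B. card {a. (a, b) \<in> W})"
proof -
  have W: "W = prod.swap ` (SIGMA b:B. {a. (a, b) \<in> W})" using assms(3) by force
  have "finite {a. (a, b) \<in> W}" for b
    using finite_imageI[OF assms(2), of fst] by (rule finite_subset[rotated]) force
  then have "card (SIGMA b:B. {a. (a, b) \<in> W}) = (\<Sum>b\<in>B. card {a. (a, b) \<in> W})"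
    using assms(1) by simp
  moreover have "card W = card (SIGMA b:B. {a. (a, b) \<in> W})"
    by (subst W, rule card_image) (simp add: inj_on_def)
  ultimately show ?thesis by simp
qed

lemma column_clique_bound:
  assumes fin: "finite A" "finite B" and S: "S \<subseteq> A \<times> B" and exp: "expansion_bound A m s"
  defines "P \<equiv> {(a, b)\<in>S. \<forall>a'. (a', b) \<in> S \<longrightarrow> m a a'}"
  shows "card P * card A \<le> s * (card P + card {(a', b)\<in>A \<times> B. \<exists>a. (a, b) \<in> P \<and> \<not> m a a'})"
    (is "_ \<le> s * (_ + card ?N)")
proof -
  have PAB: "P \<subseteq> A \<times> B" and NAB: "?N \<subseteq> A \<times> B" using S unfolding P_def by auto
  have column: "card {a. (a, b) \<in> P} * card A \<le> s * (card {a. (a, b) \<in> P} + card {a. (a, b) \<in> ?N})"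
    if "b \<in> B" for b
  proof -
    have "{a. (a, b) \<in> ?N} = nbhd A m {a. (a, b) \<in> P}"
      using that unfolding nbhd_def by auto
    moreover have "{a. (a, b) \<in> P} \<subseteq> A" using PAB by auto
    moreover have "\<forall>p\<in>{a. (a, b) \<in> P}. \<forall>q\<in>{a. (a, b) \<in> P}. m p q" unfolding P_def by auto
    ultimately show ?thesis using exp unfolding expansion_bound_def by simp
  qed
  have cP: "card P = (\<Sum>b\<in>B. card {a. (a, b) \<in> P})"
    using card_eq_sum_card_columns[OF fin(2) finite_subset[OF PAB] PAB] fin by simp
  have cN: "card ?N = (\<Sum>b\<in>B. card {a. (a, b) \<in> ?N})"
    using card_eq_sum_card_columns[OF fin(2) finite_subset[OF NAB] NAB] fin by simp
  have "card P * card A = (\<Sum>b\<in>B. card {a. (a, b) \<in> P} * card A)"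
    unfolding cP by (simp add: sum_distrib_right)
  also have "\<dots> \<le> (\<Sum>b\<in>B. s * (card {a. (a, b) \<in> P} + card {a. (a, b) \<in> ?N}))"
    using column by (rule sum_mono)
  also have "\<dots> = s * (card P + card ?N)"
    unfolding cP cN by (simp add: sum.distrib sum_distrib_left distrib_left)
  finally show ?thesis .
qed

lemma row_clique_bound:
  assumes fin: "finite A" "finite B" and S: "S \<subseteq> A \<times> B" and exp: "expansion_bound B m s"
  defines "Q \<equiv> {(a, b)\<in>S. \<forall>b'. (a, b') \<in> S \<longrightarrow> m b b'}"
  shows "card Q * card B \<le> s * (card Q + card {(a, b')\<in>A \<times> B. \<exists>b. (a, b) \<in> Q \<and> \<not> m b b'})"
    (is "_ \<le> s * (_ + card ?N)")
proof -
  have "prod.swap ` S \<subseteq> B \<times> A" using S by auto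
  moreover have "prod.swap ` Q = {(b, a)\<in>prod.swap ` S. \<forall>b'. (b', a) \<in> prod.swap ` S \<longrightarrow> m b b'}"
    unfolding Q_def by force
  moreover have "prod.swap ` ?N = {(b', a)\<in>B \<times> A. \<exists>b. (b, a) \<in> prod.swap ` Q \<and> \<not> m b b'}"
    by force
  ultimately have "card (prod.swap ` Q) * card B \<le> s * (card (prod.swap ` Q) + card (prod.swap ` ?N))"
    using column_clique_bound[OF fin(2,1) _ exp] by presburger
  then show ?thesis by (simp add: card_image)
qed

lemma le_of_weighted_bounds:
  fixes s p q xp xq N M :: nat
  assumes p: "p * N \<le> M * (p + xp)" and q: "q * N \<le> M * (q + xq)"
    and s: "s \<le> p + q" and N: "s + xp + xq \<le> N"
  shows "s \<le> M"
proof (cases "N \<le> M")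
  case True
  then show ?thesis using N by linarith
next
  case False
  have "int p * int N \<le> int M * (int p + int xp)" "int q * int N \<le> int M * (int q + int xq)"
    using p q by (metis of_nat_add of_nat_le_iff of_nat_mult)+
  then have "(int p + int q) * int N \<le> int M * (int p + int q) + int M * (int xp + int xq)"
    by (simp add: algebra_simps)
  also have "int M * (int xp + int xq) \<le> int M * (int N - int s)"
    using N by (intro mult_left_mono) auto
  finally have "(int p + int q) * (int N - int M) \<le> int M * (int N - int s)"
    by (simp add: algebra_simps)
  moreover have "int s * (int N - int M) \<le> (int p + int q) * (int N - int M)"
    using s False by (intro mult_right_mono) auto
  ultimately have "int s * int N \<le> int M * int N"
    by (simp add: algebra_simps)
  then show ?thesis using False by (simp add: mult_le_cancel_right)
qed

lemma card_cross_meeting_le: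
  fixes S :: "('a \<times> 'b) set"
  assumes fin: "finite A" "finite B" and S: "S \<subseteq> A \<times> B"
    and symA: "\<And>x y. mA x y \<longleftrightarrow> mA y x" and symB: "\<And>x y. mB x y \<longleftrightarrow> mB y x"
    and cross: "\<And>a b a' b'. (a, b) \<in> S \<Longrightarrow> (a', b') \<in> S \<Longrightarrow> mA a a' \<or> mB b b'"
    and expA: "expansion_bound A mA sA" and expB: "expansion_bound B mB sB"
  shows "card S \<le> max (sA * card B) (sB * card A)"
proof -
  define P where "P = {(a, b)\<in>S. \<forall>a'. (a', b) \<in> S \<longrightarrow> mA a a'}"
  define NP where "NP = {(a', b)\<in>A \<times> B. \<exists>a. (a, b) \<in> P \<and> \<not> mA a a'}"
  define Q where "Q = {(a, b)\<in>S. \<forall>b'. (a, b') \<in> S \<longrightarrow> mB b b'}"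
  define NQ where "NQ = {(a, b')\<in>A \<times> B. \<exists>b. (a, b) \<in> Q \<and> \<not> mB b b'}"
  define M where "M = max (sA * card B) (sB * card A)"
  have P: "card P * card A \<le> sA * (card P + card NP)"
    unfolding P_def NP_def by (rule column_clique_bound[OF fin S expA])
  have Q: "card Q * card B \<le> sB * (card Q + card NQ)"
    unfolding Q_def NQ_def by (rule row_clique_bound[OF fin S expB])
  have "S \<subseteq> P \<union> Q"
    unfolding P_def Q_def using cross symA by blast
  moreover have "finite P" "finite Q" using S fin unfolding P_def Q_def by (auto intro: finite_subset)
  ultimately have SPQ: "card S \<le> card P + card Q"
    by (meson card_Un_le card_mono finite_UnI le_trans)
  have "S \<inter> NP = {}" "S \<inter> NQ = {}" unfolding NP_def NQ_def P_def Q_def by auto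
  moreover have "NP \<inter> NQ = {}"
    unfolding NP_def NQ_def P_def Q_def using cross symB by blast
  moreover have "finite S" "finite NP" "finite NQ"
    using S fin unfolding NP_def NQ_def by (auto intro: finite_subset)
  ultimately have "card S + card NP + card NQ = card (S \<union> NP \<union> NQ)"
    by (simp add: card_Un_disjoint Int_Un_distrib2)
  also have "\<dots> \<le> card (A \<times> B)"
    using S fin unfolding NP_def NQ_def by (intro card_mono) auto
  finally have "card S + card NP + card NQ \<le> card A * card B"
    by (simp add: card_cartesian_product)
  moreover have "card P * (card A * card B) \<le> M * (card P + card NP)"
    using mult_right_mono[OF P, of "card B"] mult_right_mono[of "sA * card B" M "card P + card NP"]
    unfolding M_def by (simp add: algebra_simps)
  moreover have "card Q * (card A * card B) \<le> M * (card Q + card NQ)"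
    using mult_right_mono[OF Q, of "card A"] mult_right_mono[of "sB * card A" M "card Q + card NQ"]
    unfolding M_def by (simp add: algebra_simps)
  ultimately show ?thesis
    using le_of_weighted_bounds SPQ unfolding M_def by blast
qed

lemma comp_disjoint_permutes_apply:
  assumes a: "a permutes X" and b: "b permutes Y" and disj: "X \<inter> Y = {}"
  shows "(a \<circ> b) z = (if z \<in> X then a z else b z)"
proof (cases "z \<in> X")
  case True
  then have "z \<notin> Y" using disj by blast
  then show ?thesis using True permutes_not_in[OF b] by simp
next
  case False
  then have "b z \<notin> X" using disj permutes_in_image[OF b] permutes_not_in[OF b] by (metis disjoint_iff)
  then show ?thesis using False permutes_not_in[OF a] by simp
qed

lemma comp_disjoint_permutes_commute:
  assumes "a permutes X" "b permutes Y" "X \<inter> Y = {}"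
  shows "a \<circ> b = b \<circ> a"
proof
  fix z
  have "Y \<inter> X = {}" using assms(3) by blast
  then show "(a \<circ> b) z = (b \<circ> a) z"
    using comp_disjoint_permutes_apply[OF assms] comp_disjoint_permutes_apply[OF assms(2,1)]
      permutes_not_in[OF assms(1)] permutes_not_in[OF assms(2)] assms(3) by auto
qed

lemma comp_disjoint_permutes_eq_iff:
  assumes "a permutes X" "b permutes Y" "a' permutes X" "b' permutes Y" "X \<inter> Y = {}"
  shows "a \<circ> b = a' \<circ> b' \<longleftrightarrow> a = a' \<and> b = b'"
proof
  assume eq: "a \<circ> b = a' \<circ> b'"
  have "a z = a' z \<and> b z = b' z" for z
    using fun_cong[OF eq, of z] comp_disjoint_permutes_apply[OF assms(1,2,5), of z]
      comp_disjoint_permutes_apply[OF assms(3,4,5), of z] assms(5)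
      permutes_not_in[OF assms(1)] permutes_not_in[OF assms(2)]
      permutes_not_in[OF assms(3)] permutes_not_in[OF assms(4)]
    by (cases "z \<in> X") (auto simp: disjoint_iff)
  then show "a = a' \<and> b = b'" by auto
qed simp

lemma meets_comp_disjoint_permutes:
  assumes "a permutes X" "b permutes Y" "a' permutes X" "b' permutes Y" "X \<inter> Y = {}"
  shows "meets (X \<union> Y) (a \<circ> b) (a' \<circ> b') \<longleftrightarrow> meets X a a' \<or> meets Y b b'"
  using comp_disjoint_permutes_apply[OF assms(1,2,5)] comp_disjoint_permutes_apply[OF assms(3,4,5)]
    assms(5) unfolding meets_def by auto

lemma inj_on_comp_disjoint_permutes:
  assumes "\<forall>a\<in>A. a permutes X" "\<forall>b\<in>B. b permutes Y" "X \<inter> Y = {}"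
  shows "inj_on (\<lambda>(a, b). a \<circ> b) (A \<times> B)"
proof (rule inj_onI)
  fix u v assume "u \<in> A \<times> B" "v \<in> A \<times> B" and eq: "(\<lambda>(a, b). a \<circ> b) u = (\<lambda>(a, b). a \<circ> b) v"
  then obtain a b a' b' where "a \<in> A" "b \<in> B" "a' \<in> A" "b' \<in> B" "u = (a, b)" "v = (a', b')"
    by blast
  with eq show "u = v"
    using comp_disjoint_permutes_eq_iff[of a X b Y a' b'] assms by simp
qed

lemma comp_image_swap:
  assumes "\<forall>a\<in>A. a permutes X" "\<forall>b\<in>B. b permutes Y" "X \<inter> Y = {}"
  shows "(\<lambda>(a, b). a \<circ> b) ` (A \<times> B) = (\<lambda>(b, a). b \<circ> a) ` (B \<times> A)"
proof -
  have commute: "a \<circ> b = b \<circ> a" if "(a, b) \<in> A \<times> B" for a b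
    using comp_disjoint_permutes_commute[of a X b Y] assms that by blast
  have "(\<lambda>(a, b). a \<circ> b) ` (A \<times> B) = (\<lambda>(a, b). b \<circ> a) ` (A \<times> B)"
    by (rule image_cong[OF refl]) (metis case_prod_conv commute surj_pair)
  also have "\<dots> = (\<lambda>(b, a). b \<circ> a) ` (B \<times> A)"
    unfolding product_swap[of A B, symmetric] image_image by (simp add: case_prod_unfold)
  finally show ?thesis .
qed

lemma perm_group_on_comp_image:
  assumes grpA: "perm_group_on X A" and grpB: "perm_group_on Y B" and disj: "X \<inter> Y = {}"
  shows "perm_group_on (X \<union> Y) ((\<lambda>(a, b). a \<circ> b) ` (A \<times> B))" (is "perm_group_on _ ?AB")
  unfolding perm_group_on_def
proof (intro conjI ballI)
  note pA = perm_group_on_permutes[OF grpA] and pB = perm_group_on_permutes[OF grpB]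
  show "g permutes (X \<union> Y)" if "g \<in> ?AB" for g
    using that permutes_compose[OF permutes_subset[OF pB] permutes_subset[OF pA]] by auto
  show "id \<in> ?AB"
    using grpA grpB unfolding perm_group_on_def by (auto intro!: image_eqI[of id _ "(id, id)"])
  show "g \<circ> h \<in> ?AB" if g: "g \<in> ?AB" and h: "h \<in> ?AB" for g h
  proof -
    obtain a b a' b' where ab: "a \<in> A" "b \<in> B" "a' \<in> A" "b' \<in> B" "g = a \<circ> b" "h = a' \<circ> b'"
      using g h by auto
    then have "g \<circ> h = (a \<circ> a') \<circ> (b \<circ> b')"
      using comp_disjoint_permutes_commute[OF pA[OF ab(3)] pB[OF ab(2)] disj] by (metis comp_assoc)
    then show ?thesis
      using ab perm_group_on_comp[OF grpA] perm_group_on_comp[OF grpB]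
      by (auto intro!: image_eqI[of _ _ "(a \<circ> a', b \<circ> b')"])
  qed
  show "inv g \<in> ?AB" if g: "g \<in> ?AB" for g
  proof -
    obtain a b where ab: "a \<in> A" "b \<in> B" "g = a \<circ> b" using g by auto
    then have "inv g = inv b \<circ> inv a"
      using o_inv_distrib[OF permutes_bij[OF pA[OF ab(1)]] permutes_bij[OF pB[OF ab(2)]]] by simp
    also have "\<dots> = inv a \<circ> inv b"
      using comp_disjoint_permutes_commute[OF permutes_inv[OF pA[OF ab(1)]] permutes_inv[OF pB[OF ab(2)]] disj]
      by simp
    finally show ?thesis
      using ab perm_group_on_inv[OF grpA] perm_group_on_inv[OF grpB]
      by (auto intro!: image_eqI[of _ _ "(inv a, inv b)"])
  qed
qed

lemma card_stabilizer_comp_image: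
  assumes pA: "\<forall>a\<in>A. a permutes X" and pB: "\<forall>b\<in>B. b permutes Y" and disj: "X \<inter> Y = {}"
    and x: "x \<in> X"
  shows "card (stabilizer ((\<lambda>(a, b). a \<circ> b) ` (A \<times> B)) x) = card (stabilizer A x) * card B"
proof -
  have "b x = x" if "b \<in> B" for b
    using permutes_not_in[of b Y x] pB disj x that by blast
  then have "stabilizer ((\<lambda>(a, b). a \<circ> b) ` (A \<times> B)) x = (\<lambda>(a, b). a \<circ> b) ` (stabilizer A x \<times> B)"
    unfolding stabilizer_def by fastforce
  moreover have "inj_on (\<lambda>(a, b). a \<circ> b) (stabilizer A x \<times> B)"
    using inj_on_comp_disjoint_permutes[OF _ pB disj] pA unfolding stabilizer_def by auto
  ultimately show ?thesis by (simp add: card_image card_cartesian_product)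
qed

lemma max_stabilizer_mult_le:
  assumes fin: "finite X" "finite Y" and ne: "X \<noteq> {}"
    and pA: "\<forall>a\<in>A. a permutes X" and pB: "\<forall>b\<in>B. b permutes Y" and disj: "X \<inter> Y = {}"
  shows "Max ((\<lambda>x. card (stabilizer A x)) ` X) * card B
    \<le> Max ((\<lambda>x. card (stabilizer ((\<lambda>(a, b). a \<circ> b) ` (A \<times> B)) x)) ` (X \<union> Y))"
proof -
  have "Max ((\<lambda>x. card (stabilizer A x)) ` X) \<in> (\<lambda>x. card (stabilizer A x)) ` X"
    using fin ne by (intro Max_in) auto
  then obtain x where x: "x \<in> X" and max: "Max ((\<lambda>x. card (stabilizer A x)) ` X) = card (stabilizer A x)"
    by auto
  have "card (stabilizer A x) * card B
    \<in> (\<lambda>x. card (stabilizer ((\<lambda>(a, b). a \<circ> b) ` (A \<times> B)) x)) ` (X \<union> Y)"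
    using x card_stabilizer_comp_image[OF pA pB disj x] by (intro rev_image_eqI[of x]) auto
  then show ?thesis
    unfolding max using fin by (intro Max_ge) auto
qed

lemma card_intersecting_comp_image_le:
  assumes fin: "finite X" "finite Y" and ne: "X \<noteq> {}" "Y \<noteq> {}" and disj: "X \<inter> Y = {}"
    and grpA: "perm_group_on X A" and grpB: "perm_group_on Y B"
    and ekrA: "EKR X A" and ekrB: "EKR Y B"
    and S: "S \<subseteq> (\<lambda>(a, b). a \<circ> b) ` (A \<times> B)" "intersecting (X \<union> Y) S"
  shows "card S \<le> max (Max ((\<lambda>x. card (stabilizer A x)) ` X) * card B)
                       (Max ((\<lambda>y. card (stabilizer B y)) ` Y) * card A)"
proof -
  note pA = perm_group_on_permutes[OF grpA] and pB = perm_group_on_permutes[OF grpB]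
  define T where "T = {(a, b)\<in>A \<times> B. a \<circ> b \<in> S}"
  have "S = (\<lambda>(a, b). a \<circ> b) ` T" using S(1) unfolding T_def by force
  moreover have "inj_on (\<lambda>(a, b). a \<circ> b) T"
    using inj_on_comp_disjoint_permutes[of A X B Y] pA pB disj
    by (auto simp: T_def intro: inj_on_subset)
  ultimately have "card S = card T" by (simp add: card_image)
  have "\<forall>p\<in>S. \<forall>q\<in>S. meets (X \<union> Y) p q"
    using S intersecting_iff_meets[of S "X \<union> Y"] perm_group_on_comp_image[OF grpA grpB disj]
    unfolding perm_group_on_def by blast
  then have cross: "meets X a a' \<or> meets Y b b'" if "(a, b) \<in> T" "(a', b') \<in> T" for a b a' b'
    using that meets_comp_disjoint_permutes[OF pA pB pA pB disj] unfolding T_def by blast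
  have "card T \<le> max (Max ((\<lambda>x. card (stabilizer A x)) ` X) * card B)
                      (Max ((\<lambda>y. card (stabilizer B y)) ` Y) * card A)"
    using perm_group_on_finite[OF grpA fin(1)] perm_group_on_finite[OF grpB fin(2)]
    by (rule card_cross_meeting_le[OF _ _ _ meets_sym meets_sym cross
          expansion_bound_if_EKR[OF grpA ekrA fin(1) ne(1)]
          expansion_bound_if_EKR[OF grpB ekrB fin(2) ne(2)]])
      (auto simp: T_def)
  with \<open>card S = card T\<close> show ?thesis by simp
qed

lemma EKR_comp_image:
  assumes fin: "finite X" "finite Y" and disj: "X \<inter> Y = {}"
    and grpA: "perm_group_on X A" and grpB: "perm_group_on Y B"
    and ekrA: "EKR X A" and ekrB: "EKR Y B"
  shows "EKR (X \<union> Y) ((\<lambda>(a, b). a \<circ> b) ` (A \<times> B))"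
proof (cases "X = {} \<or> Y = {}")
  case True
  then show ?thesis
  proof
    assume "X = {}"
    then have "(\<lambda>(a, b). a \<circ> b) ` (A \<times> B) = B" using perm_group_on_empty grpA by force
    with \<open>X = {}\<close> ekrB show ?thesis by simp
  next
    assume "Y = {}"
    then have "(\<lambda>(a, b). a \<circ> b) ` (A \<times> B) = A" using perm_group_on_empty grpB by force
    with \<open>Y = {}\<close> ekrA show ?thesis by simp
  qed
next
  case False
  note pA = perm_group_on_permutes[OF grpA] and pB = perm_group_on_permutes[OF grpB]
  have "Max ((\<lambda>y. card (stabilizer B y)) ` Y) * card A
    \<le> Max ((\<lambda>x. card (stabilizer ((\<lambda>(a, b). a \<circ> b) ` (A \<times> B)) x)) ` (X \<union> Y))"
    using max_stabilizer_mult_le[of Y X B A] fin False pA pB disj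
    by (simp add: comp_image_swap[of A X B Y] Un_commute Int_commute)
  moreover have "Max ((\<lambda>x. card (stabilizer A x)) ` X) * card B
    \<le> Max ((\<lambda>x. card (stabilizer ((\<lambda>(a, b). a \<circ> b) ` (A \<times> B)) x)) ` (X \<union> Y))"
    using max_stabilizer_mult_le[of X Y A B] fin False pA pB disj by simp
  ultimately show ?thesis
    using card_intersecting_comp_image_le[OF fin _ _ disj grpA grpB ekrA ekrB] False
    unfolding EKR_def by (meson max.bounded_iff order_trans)
qed

lemma foldr_comp_eq_comp_id: "foldr (\<circ>) fs g = foldr (\<circ>) fs id \<circ> g"
  by (induction fs) (simp_all add: comp_assoc)

lemma internal_dprod_0: "internal_dprod 0 G = {id}"
  unfolding internal_dprod_def by simp

lemma internal_dprod_Suc: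
  "internal_dprod (Suc k) G = (\<lambda>(a, b). a \<circ> b) ` (internal_dprod k G \<times> G k)"
proof (intro equalityI subsetI)
  fix g assume "g \<in> internal_dprod (Suc k) G"
  then obtain f where f: "g = foldr (\<circ>) (map f [0..<Suc k]) id" "\<forall>i<Suc k. f i \<in> G i"
    unfolding internal_dprod_def by blast
  then have "g = foldr (\<circ>) (map f [0..<k]) id \<circ> f k"
    using foldr_comp_eq_comp_id[of "map f [0..<k]" "f k"] by simp
  moreover have "foldr (\<circ>) (map f [0..<k]) id \<in> internal_dprod k G"
    using f(2) unfolding internal_dprod_def by auto
  ultimately show "g \<in> (\<lambda>(a, b). a \<circ> b) ` (internal_dprod k G \<times> G k)"
    using f(2) by blast
next
  fix g assume "g \<in> (\<lambda>(a, b). a \<circ> b) ` (internal_dprod k G \<times> G k)"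
  then obtain f b where fb: "g = foldr (\<circ>) (map f [0..<k]) id \<circ> b" "b \<in> G k" "\<forall>i<k. f i \<in> G i"
    unfolding internal_dprod_def by auto
  then have "g = foldr (\<circ>) (map (f(k := b)) [0..<Suc k]) id"
    using foldr_comp_eq_comp_id[of "map f [0..<k]" b] by simp
  moreover have "\<forall>i<Suc k. (f(k := b)) i \<in> G i"
    using fb(2,3) by (simp add: less_Suc_eq)
  ultimately show "g \<in> internal_dprod (Suc k) G"
    unfolding internal_dprod_def by blast
qed

lemma UN_lessThan_Int_disjoint:
  fixes Om :: "nat \<Rightarrow> 'a set"
  assumes "\<And>i j. i < k \<Longrightarrow> j < k \<Longrightarrow> i \<noteq> j \<Longrightarrow> Om i \<inter> Om j = {}" "m < k"
  shows "(\<Union>i<m. Om i) \<inter> Om m = {}"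
proof -
  have "Om i \<inter> Om m = {}" if "i < m" for i
    using assms(2) that by (intro assms(1)) auto
  then show ?thesis by blast
qed

lemma perm_group_on_internal_dprod:
  assumes disj: "\<And>i j. i < k \<Longrightarrow> j < k \<Longrightarrow> i \<noteq> j \<Longrightarrow> Om i \<inter> Om j = {}"
    and grp: "\<And>i. i < k \<Longrightarrow> perm_group_on (Om i) (G i)"
  shows "perm_group_on (\<Union>i<k. Om i) (internal_dprod k G)"
  using assms
proof (induction k)
  case 0
  then show ?case by (simp add: internal_dprod_0 perm_group_on_def permutes_id)
next
  case (Suc m)
  have "perm_group_on ((\<Union>i<m. Om i) \<union> Om m) (internal_dprod (Suc m) G)"
    unfolding internal_dprod_Suc using Suc UN_lessThan_Int_disjoint[of "Suc m" Om m]
    by (intro perm_group_on_comp_image) auto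
  then show ?case by (simp add: lessThan_Suc Un_commute)
qed

lemma EKR_internal_dprod:
  assumes fin: "\<And>i. i < k \<Longrightarrow> finite (Om i)"
    and disj: "\<And>i j. i < k \<Longrightarrow> j < k \<Longrightarrow> i \<noteq> j \<Longrightarrow> Om i \<inter> Om j = {}"
    and grp: "\<And>i. i < k \<Longrightarrow> perm_group_on (Om i) (G i)"
    and ekr: "\<And>i. i < k \<Longrightarrow> EKR (Om i) (G i)"
  shows "EKR (\<Union>i<k. Om i) (internal_dprod k G)"
  using assms
proof (induction k)
  case 0
  then show ?case by (simp add: EKR_empty)
next
  case (Suc m)
  have "EKR ((\<Union>i<m. Om i) \<union> Om m) (internal_dprod (Suc m) G)"
    unfolding internal_dprod_Suc using Suc UN_lessThan_Int_disjoint[of "Suc m" Om m]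
    by (intro EKR_comp_image perm_group_on_internal_dprod) auto
  then show ?case by (simp add: lessThan_Suc Un_commute)
qed

theorem theorem18:
  fixes n k :: nat
    and Om :: "nat \<Rightarrow> nat set"
    and G :: "nat \<Rightarrow> (nat \<Rightarrow> nat) set"
  assumes nonempty: "\<And>i. i < k \<Longrightarrow> Om i \<noteq> {}"
    and sub: "\<And>i. i < k \<Longrightarrow> Om i \<subseteq> {1..n}"
    and disj: "\<And>i j. i < k \<Longrightarrow> j < k \<Longrightarrow> i \<noteq> j \<Longrightarrow> Om i \<inter> Om j = {}"
    and grp: "\<And>i. i < k \<Longrightarrow> perm_group_on (Om i) (G i)"
    and ekr: "\<And>i. i < k \<Longrightarrow> EKR (Om i) (G i)"
  shows "EKR (\<Union>i<k. Om i) (internal_dprod k G)"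
proof (rule EKR_internal_dprod[OF _ disj grp ekr])
  show "finite (Om i)" if "i < k" for i
    using finite_subset[OF sub[OF that]] by simp
qed

end
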